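(* In the static load balancing game described in the context, suppose that initially each player $i$ uses an action $a_i^0$ with $a_{ij}^0\neq 0$ for all $i\in[n]$, $j\in[m]$. Suppose the players update their actions sequentially, each player exactly once and in any order, each time replacing its action by its (unique) best response to the current actions of the other players, i.e., by the minimizer of $D_i(\cdot,a_{-i})$ over the simplex $A_i$. Then the resulting action profile is a pure Nash equilibrium. In other words, the best-response dynamics converge to a pure Nash equilibrium in $n$ iterations.
   Context: Static load balancing game: there are $m$ servers $[m]$ with service rates $\mu_j>0$ and initial loads $s_j^0\ge 0$, and $n$ players $[n]$; player $i$ holds a job of length $\lambda_i>0$. Player $i$'s action set is $A_i=\{a_i=(a_{i1},\dots,a_{im}):\sum_j a_{ij}=1,\ a_{ij}\ge0\}$, $a_{ij}$ being the fraction of job $i$ placed on server $j$. The cost of player $i$ under profile $a$ is $$D_i(a)=\sum_{j=1}^m \lambda_i a_{ij}\left(\frac{\lambda_i a_{ij}}{2\mu_j}+\frac{s_j^0+\sum_{k\neq i}\lambda_k a_{kj}}{\mu_j}\right),$$ which is strongly convex in $a_i$. A pure Nash equilibrium is a profile $a$ with $D_i(a_i,a_{-i})\le D_i(a_i',a_{-i})$ for all $i$ and $a_i'\in A_i$. *)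

theory Defs
  imports Complex_Main
begin

text \<open>Servers are indexed by j < m, players by i < n. A profile is a function
  a :: nat => nat => real with a i j the fraction of job i placed on server j.\<close>

definition simplex :: "nat \<Rightarrow> (nat \<Rightarrow> real) set" where
  "simplex m = {x. (\<forall>j<m. 0 \<le> x j) \<and> (\<Sum>j<m. x j) = 1}"

definition cost ::
  "nat \<Rightarrow> nat \<Rightarrow> (nat \<Rightarrow> real) \<Rightarrow> (nat \<Rightarrow> real) \<Rightarrow> (nat \<Rightarrow> real)
   \<Rightarrow> nat \<Rightarrow> (nat \<Rightarrow> nat \<Rightarrow> real) \<Rightarrow> real" where
  "cost m n mu s0 lam i a =
     (\<Sum>j<m. lam i * a i j *
        (lam i * a i j / (2 * mu j)
         + (s0 j + (\<Sum>k\<in>{..<n} - {i}. lam k * a k j)) / mu j))"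

definition best_response ::
  "nat \<Rightarrow> nat \<Rightarrow> (nat \<Rightarrow> real) \<Rightarrow> (nat \<Rightarrow> real) \<Rightarrow> (nat \<Rightarrow> real)
   \<Rightarrow> nat \<Rightarrow> (nat \<Rightarrow> nat \<Rightarrow> real) \<Rightarrow> (nat \<Rightarrow> real) \<Rightarrow> bool" where
  "best_response m n mu s0 lam i a b \<longleftrightarrow>
     b \<in> simplex m \<and>
     (\<forall>b'\<in>simplex m. cost m n mu s0 lam i (a(i := b)) \<le> cost m n mu s0 lam i (a(i := b')))"

definition pure_NE ::
  "nat \<Rightarrow> nat \<Rightarrow> (nat \<Rightarrow> real) \<Rightarrow> (nat \<Rightarrow> real) \<Rightarrow> (nat \<Rightarrow> real)
   \<Rightarrow> (nat \<Rightarrow> nat \<Rightarrow> real) \<Rightarrow> bool" where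
  "pure_NE m n mu s0 lam a \<longleftrightarrow>
     (\<forall>i<n. a i \<in> simplex m) \<and>
     (\<forall>i<n. \<forall>b'\<in>simplex m. cost m n mu s0 lam i a \<le> cost m n mu s0 lam i (a(i := b')))"

end

(*
  The cost of player i is a strictly convex separable quadratic in its own action, whose
  marginal cost on server j is lam_i times the normalized load (s0_j + sum_k lam_k a_kj) / mu_j
  after the move. By the KKT conditions on the simplex, b is a best response iff every server
  used by b is least loaded afterwards; so a profile is a Nash equilibrium iff every player
  uses only least-loaded servers.

  This property is invariant for the players that have already moved. When a fresh player p,
  whose action still has full support, best-responds, the minimal load cannot decrease:
  otherwise p would put strictly less mass than before on every server, although both actions
  sum to 1. A server j used by an earlier mover had the old minimal load; if p dropped j, its
  load would fall below that minimum, hence below the new one, which is absurd. So j is used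
  by p and is least loaded again.
*)

theory Submission
  imports Defs
begin

lemma simplex_nonneg: "x \<in> simplex m \<Longrightarrow> j < m \<Longrightarrow> 0 \<le> x j"
  unfolding simplex_def by simp

lemma simplex_sum: "x \<in> simplex m \<Longrightarrow> (\<Sum>j<m. x j) = 1"
  unfolding simplex_def by simp

lemma simplex_ex_pos:
  assumes "x \<in> simplex m"
  obtains j where "j < m" "0 < x j"
proof (rule ccontr)
  assume "\<not> thesis"
  then have "\<forall>j<m. x j \<le> 0" using that by force
  then have "(\<Sum>j<m. x j) \<le> 0" by (intro sum_nonpos) auto
  with simplex_sum[OF assms] show False by simp
qed

definition separable_quadratic ::
  "nat \<Rightarrow> (nat \<Rightarrow> real) \<Rightarrow> (nat \<Rightarrow> real) \<Rightarrow> (nat \<Rightarrow> real) \<Rightarrow> real" where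
  "separable_quadratic m q r x = (\<Sum>j<m. x j * (q j * x j / 2 + r j))"

lemma separable_quadratic_diff:
  "separable_quadratic m q r y - separable_quadratic m q r x
     = (\<Sum>j<m. (y j - x j) * (r j + q j * x j) + q j * (y j - x j)^2 / 2)"
  unfolding separable_quadratic_def sum_subtractf[symmetric]
  by (intro sum.cong refl) (simp add: field_simps power2_eq_square)

lemma separable_quadratic_min_imp_marginal_le:
  assumes q_pos: "\<forall>j<m. q j > 0" and x: "x \<in> simplex m"
    and min: "\<forall>y\<in>simplex m. separable_quadratic m q r x \<le> separable_quadratic m q r y"
    and j: "j < m" and j': "j' < m" and pos: "x j > 0"
  shows "r j + q j * x j \<le> r j' + q j' * x j'"
proof (rule ccontr)
  define d where "d = (r j + q j * x j) - (r j' + q j' * x j')"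
  define K where "K = q j + q j'"
  assume "\<not> ?thesis"
  then have d: "d > 0" and neq: "j \<noteq> j'" unfolding d_def by auto
  have K: "K > 0" using q_pos j j' unfolding K_def by (simp add: add_pos_pos)
  define e where "e = min (x j) (d / K)"
  have e: "0 < e" "e \<le> x j" "e * K \<le> d"
    using pos d K by (auto simp: e_def min_def pos_le_divide_eq pos_divide_le_eq)
  define y where "y = x(j := x j - e, j' := x j' + e)"
  have "y \<in> simplex m"
  proof -
    have "(\<Sum>k<m. y k) = (\<Sum>k<m. x k)"
      unfolding y_def using j j' neq
      by (simp add: sum.remove[of _ j] sum.remove[of _ j'] lessThan_iff)
    then show ?thesis using x e unfolding simplex_def y_def by auto
  qed
  then have "0 \<le> separable_quadratic m q r y - separable_quadratic m q r x"
    using min by auto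
  also have "\<dots> = (\<Sum>k\<in>{j, j'}. (y k - x k) * (r k + q k * x k) + q k * (y k - x k)^2 / 2)"
    unfolding separable_quadratic_diff using j j'
    by (intro sum.mono_neutral_right) (auto simp: y_def)
  also have "\<dots> = e * (e * K / 2 - d)"
    using neq unfolding y_def d_def K_def by (simp add: algebra_simps power2_eq_square)
  also have "\<dots> < 0"
    using e d by (simp add: mult_pos_neg)
  finally show False by simp
qed

lemma marginal_le_imp_separable_quadratic_min:
  assumes q_nonneg: "\<forall>j<m. q j \<ge> 0" and x: "x \<in> simplex m" and y: "y \<in> simplex m"
    and marg: "\<forall>j<m. \<forall>j'<m. x j > 0 \<longrightarrow> r j + q j * x j \<le> r j' + q j' * x j'"
  shows "separable_quadratic m q r x \<le> separable_quadratic m q r y"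
proof -
  define g where "g j = r j + q j * x j" for j
  obtain j0 where j0: "j0 < m" "0 < x j0" using simplex_ex_pos[OF x] .
  have g_min: "g j0 \<le> g j" if "j < m" for j
    using marg j0 that unfolding g_def by blast
  have g_eq: "g j = g j0" if "j < m" "x j > 0" for j
    using marg j0 that unfolding g_def by (meson order_antisym)
  have term_ge: "(y j - x j) * g j0 \<le> (y j - x j) * g j" if "j < m" for j
  proof (cases "x j > 0")
    case False
    then have "x j = 0" using simplex_nonneg[OF x that] by simp
    then show ?thesis using simplex_nonneg[OF y that] g_min[OF that]
      by (simp add: mult_left_mono)
  qed (simp add: g_eq[OF that])
  have "0 = (\<Sum>j<m. y j - x j) * g j0"
    using simplex_sum[OF x] simplex_sum[OF y] by (simp add: sum_subtractf)
  also have "\<dots> \<le> (\<Sum>j<m. (y j - x j) * g j + q j * (y j - x j)^2 / 2)"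
    unfolding sum_distrib_right
    using term_ge q_nonneg by (intro sum_mono add_increasing2) auto
  also have "\<dots> = separable_quadratic m q r y - separable_quadratic m q r x"
    unfolding separable_quadratic_diff g_def ..
  finally show ?thesis by simp
qed

lemma separable_quadratic_min_iff:
  assumes "\<forall>j<m. q j > 0" and "x \<in> simplex m"
  shows "(\<forall>y\<in>simplex m. separable_quadratic m q r x \<le> separable_quadratic m q r y)
     \<longleftrightarrow> (\<forall>j<m. \<forall>j'<m. x j > 0 \<longrightarrow> r j + q j * x j \<le> r j' + q j' * x j')"
  using assms separable_quadratic_min_imp_marginal_le marginal_le_imp_separable_quadratic_min
  by (metis less_imp_le)

locale load_balancing_game =
  fixes m n :: nat and mu s0 lam :: "nat \<Rightarrow> real"
  assumes mu_pos: "\<forall>j<m. mu j > 0" and lam_pos: "\<forall>i<n. lam i > 0"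
begin

definition load :: "(nat \<Rightarrow> nat \<Rightarrow> real) \<Rightarrow> nat \<Rightarrow> real" where
  "load a j = (s0 j + (\<Sum>k<n. lam k * a k j)) / mu j"

definition uses_least_loaded :: "(nat \<Rightarrow> nat \<Rightarrow> real) \<Rightarrow> nat \<Rightarrow> bool" where
  "uses_least_loaded a i \<longleftrightarrow> (\<forall>j<m. a i j > 0 \<longrightarrow> (\<forall>j'<m. load a j \<le> load a j'))"

lemma weighted_sum_fun_upd:
  assumes "i < n"
  shows "(\<Sum>k<n. lam k * (a(i := b)) k j) = lam i * b j + (\<Sum>k\<in>{..<n} - {i}. lam k * a k j)"
  using assms by (simp add: sum.remove[of _ i])

lemma load_fun_upd:
  assumes "i < n"
  shows "load (a(i := b)) j = load (a(i := (\<lambda>_. 0))) j + lam i * b j / mu j"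
  unfolding load_def weighted_sum_fun_upd[OF assms] by (simp add: add_divide_distrib)

lemma cost_fun_upd:
  assumes "i < n"
  shows "cost m n mu s0 lam i (a(i := b))
    = separable_quadratic m (\<lambda>j. lam i ^ 2 / mu j) (\<lambda>j. lam i * load (a(i := (\<lambda>_. 0))) j) b"
  unfolding cost_def separable_quadratic_def load_def weighted_sum_fun_upd[OF assms]
  by (intro sum.cong refl) (auto simp: field_simps power2_eq_square intro!: sum.cong)

lemma best_response_iff:
  assumes i: "i < n"
  shows "best_response m n mu s0 lam i a b \<longleftrightarrow> b \<in> simplex m \<and> uses_least_loaded (a(i := b)) i"
proof (cases "b \<in> simplex m")
  case True
  have marginal:
    "lam i * load (a(i := (\<lambda>_. 0))) j + lam i ^ 2 / mu j * b j = lam i * load (a(i := b)) j" for j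
    unfolding load_fun_upd[OF i, of a b] by (simp add: algebra_simps power2_eq_square)
  have "\<forall>j<m. lam i ^ 2 / mu j > 0" using mu_pos lam_pos i by (simp add: power2_eq_square)
  from separable_quadratic_min_iff[OF this True, of "\<lambda>j. lam i * load (a(i := (\<lambda>_. 0))) j"]
  have "best_response m n mu s0 lam i a b
      \<longleftrightarrow> (\<forall>j<m. \<forall>j'<m. b j > 0 \<longrightarrow> lam i * load (a(i := b)) j \<le> lam i * load (a(i := b)) j')"
    using True unfolding best_response_def cost_fun_upd[OF i] marginal by simp
  then show ?thesis
    using lam_pos i True unfolding uses_least_loaded_def by auto
qed (simp add: best_response_def)

lemma pure_NE_iff:
  "pure_NE m n mu s0 lam a \<longleftrightarrow> (\<forall>i<n. a i \<in> simplex m \<and> uses_least_loaded a i)"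
proof -
  have "pure_NE m n mu s0 lam a \<longleftrightarrow> (\<forall>i<n. best_response m n mu s0 lam i a (a i))"
    unfolding pure_NE_def best_response_def by auto
  then show ?thesis using best_response_iff by simp
qed

lemma best_response_keeps_load_lower_bound:
  assumes p: "p < n" and ap: "a p \<in> simplex m" "\<forall>j<m. a p j > 0"
    and br: "best_response m n mu s0 lam p a b"
    and c: "\<forall>j<m. c \<le> load a j" and j: "j < m"
  shows "c \<le> load (a(p := b)) j"
proof -
  define a' where "a' = a(p := b)"
  have b: "b \<in> simplex m" and least: "uses_least_loaded a' p"
    using br best_response_iff[OF p] unfolding a'_def by auto
  obtain j0 where j0: "j0 < m" "b j0 > 0" using simplex_ex_pos[OF b] .
  have "c \<le> load a' j0"
  proof (rule ccontr)
    assume below: "\<not> c \<le> load a' j0"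
    have "b k < a p k" if k: "k < m" for k
    proof (cases "b k > 0")
      case True
      then have "load a' k < load a k"
        using least j0 below c k unfolding uses_least_loaded_def a'_def
        by (metis fun_upd_same less_le_trans not_le order_trans)
      then have "lam p * b k / mu k < lam p * a p k / mu k"
        using load_fun_upd[OF p, of a b k] load_fun_upd[OF p, of a "a p" k]
        unfolding a'_def by simp
      then show ?thesis using mu_pos lam_pos p k by (simp add: divide_less_cancel)
    next
      case False
      then show ?thesis using ap k by force
    qed
    then have "(\<Sum>k<m. b k) < (\<Sum>k<m. a p k)"
      using j0 by (intro sum_strict_mono) auto
    then show False using simplex_sum[OF b] simplex_sum[OF ap(1)] by simp
  qed
  also have "load a' j0 \<le> load a' j"
    using least j0 j unfolding uses_least_loaded_def a'_def by simp
  finally show ?thesis unfolding a'_def .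
qed

lemma best_response_keeps_uses_least_loaded:
  assumes p: "p < n" and ap: "a p \<in> simplex m" "\<forall>j<m. a p j > 0"
    and br: "best_response m n mu s0 lam p a b"
    and i: "i \<noteq> p" "uses_least_loaded a i"
  shows "uses_least_loaded (a(p := b)) i"
  unfolding uses_least_loaded_def
proof (intro allI impI)
  fix j j' assume j: "j < m" and used: "(a(p := b)) i j > 0" and j': "j' < m"
  have b: "b \<in> simplex m" and least: "uses_least_loaded (a(p := b)) p"
    using br best_response_iff[OF p] by auto
  show "load (a(p := b)) j \<le> load (a(p := b)) j'"
  proof (cases "b j > 0")
    case True
    then show ?thesis using least j j' unfolding uses_least_loaded_def by simp
  next
    case False
    then have "b j = 0" using simplex_nonneg[OF b j] by simp
    then have "load (a(p := b)) j < load a j"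
      using load_fun_upd[OF p, of a b j] load_fun_upd[OF p, of a "a p" j] mu_pos lam_pos p ap j
      by simp
    also have "load a j \<le> load (a(p := b)) j'"
      using best_response_keeps_load_lower_bound[OF p ap br _ j'] i used j
      unfolding uses_least_loaded_def by simp
    finally show ?thesis by simp
  qed
qed

lemma best_response_dynamics_invariant:
  fixes \<sigma> :: "nat \<Rightarrow> nat" and seq :: "nat \<Rightarrow> nat \<Rightarrow> nat \<Rightarrow> real"
  assumes init_action: "\<forall>i<n. seq 0 i \<in> simplex m"
    and init_nonzero: "\<forall>i<n. \<forall>j<m. seq 0 i j \<noteq> 0"
    and order: "bij_betw \<sigma> {..<n} {..<n}"
    and update: "\<forall>k<n. \<exists>b. best_response m n mu s0 lam (\<sigma> k) (seq k) b
                          \<and> seq (Suc k) = (seq k)(\<sigma> k := b)"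
    and "k \<le> n"
  shows "(\<forall>i<n. i \<notin> \<sigma> ` {..<k} \<longrightarrow> seq k i = seq 0 i)
    \<and> (\<forall>i\<in>\<sigma> ` {..<k}. seq k i \<in> simplex m \<and> uses_least_loaded (seq k) i)"
  using \<open>k \<le> n\<close>
proof (induction k)
  case (Suc k)
  define p where "p = \<sigma> k"
  have p: "p < n" "p \<notin> \<sigma> ` {..<k}"
    using order Suc.prems unfolding p_def bij_betw_def inj_on_def by (auto, force)
  have moved: "\<sigma> ` {..<Suc k} = insert p (\<sigma> ` {..<k})"
    unfolding p_def by (simp add: lessThan_Suc)
  obtain b where br: "best_response m n mu s0 lam p (seq k) b"
    and step: "seq (Suc k) = (seq k)(p := b)"
    using update Suc.prems unfolding p_def by (meson Suc_le_lessD)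
  have unmoved: "\<forall>i<n. i \<notin> \<sigma> ` {..<k} \<longrightarrow> seq k i = seq 0 i"
    and moved_least: "\<forall>i\<in>\<sigma> ` {..<k}. seq k i \<in> simplex m \<and> uses_least_loaded (seq k) i"
    using Suc by auto
  have fresh: "seq k p \<in> simplex m" "\<forall>j<m. seq k p j > 0"
    using unmoved init_action init_nonzero p simplex_nonneg by (auto simp: order_less_le)
  have "seq (Suc k) p \<in> simplex m \<and> uses_least_loaded (seq (Suc k)) p"
    using br best_response_iff[OF p(1)] unfolding step by simp
  moreover have "seq (Suc k) i \<in> simplex m \<and> uses_least_loaded (seq (Suc k)) i"
    if "i \<in> \<sigma> ` {..<k}" for i
    using best_response_keeps_uses_least_loaded[OF p(1) fresh br] moved_least p(2) that
    unfolding step by (metis fun_upd_other)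
  moreover have "seq (Suc k) i = seq 0 i" if "i < n" "i \<notin> \<sigma> ` {..<Suc k}" for i
    using unmoved that unfolding moved step by simp
  ultimately show ?case unfolding moved by blast
qed simp

end

theorem theorem2:
  fixes m n :: nat
    and mu s0 lam :: "nat \<Rightarrow> real"
    and \<sigma> :: "nat \<Rightarrow> nat"
    and seq :: "nat \<Rightarrow> nat \<Rightarrow> nat \<Rightarrow> real"
  assumes mu_pos: "\<forall>j<m. mu j > 0"
    and s0_nonneg: "\<forall>j<m. s0 j \<ge> 0"
    and lam_pos: "\<forall>i<n. lam i > 0"
    and init_action: "\<forall>i<n. seq 0 i \<in> simplex m"
    and init_nonzero: "\<forall>i<n. \<forall>j<m. seq 0 i j \<noteq> 0"
    and order: "bij_betw \<sigma> {..<n} {..<n}"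
    and update: "\<forall>k<n. \<exists>b. best_response m n mu s0 lam (\<sigma> k) (seq k) b
                          \<and> seq (Suc k) = (seq k)(\<sigma> k := b)"
  shows "pure_NE m n mu s0 lam (seq n)"
proof -
  interpret load_balancing_game m n mu s0 lam
    using mu_pos lam_pos by unfold_locales
  have "\<sigma> ` {..<n} = {..<n}"
    using order by (simp add: bij_betw_def)
  then show ?thesis
    using best_response_dynamics_invariant[OF init_action init_nonzero order update order_refl]
    unfolding pure_NE_iff by simp
qed

end
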